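(* Consider the cubic system \[ \dot x = -y + a_{02}y^2 + a_{03}y^3,\qquad \dot y = x + b_{20}x^2 + b_{11}xy + b_{02}y^2 + b_{30}x^3 + b_{21}x^2y + b_{12}xy^2, \] where the coefficients $a_{02},a_{03},b_{20},b_{11},b_{02},b_{30},b_{21},b_{12}$ are allowed to be complex (the system being considered on $\mathbb{C}^2$; for real coefficients this is a real planar system). The system is linearizable at the origin if one of the following conditions holds: \begin{enumerate} \item $b_{12}=a_{02}=b_{30}=b_{21}=a_{03}=b_{02}+b_{20}=b_{11}^2+4b_{20}^2=0$; \item $b_{12}=a_{02}=b_{20}=b_{02}=b_{21}=a_{03}=9b_{30}-b_{11}^2=0$; \item $b_{12}=a_{02}=b_{11}=b_{20}=b_{30}=b_{21}=9a_{03}+4b_{02}^2=0$; \item $b_{12}=b_{30}=b_{21}=a_{03}=2b_{02}+5b_{20}=10a_{02}-3b_{11}=4b_{11}^2+25b_{20}^2=0$. \end{enumerate}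
   Context: A system $\dot x=-y+P(x,y)$, $\dot y = x+Q(x,y)$, with $P,Q$ polynomials without constant and linear terms, is called linearizable (at the origin) if there is an analytic change of coordinates $x_1 = x+\sum_{m+n\ge 2}c_{m,n}x^my^n$, $y_1=y+\sum_{m+n\ge2}d_{m,n}x^my^n$ which transforms it into $\dot x_1=-y_1$, $\dot y_1 = x_1$. For real systems, linearizability at the origin is equivalent to the origin being an isochronous center (a center all of whose nearby periodic orbits have the same period). *)

theory Defs
  imports "HOL-Analysis.Analysis"
begin

definition dps :: "(nat \<Rightarrow> nat \<Rightarrow> complex) \<Rightarrow> complex \<Rightarrow> complex \<Rightarrow> complex" where
  "dps c x y = (\<Sum>\<^sub>\<infinity>(m,n)\<in>UNIV. c m n * x ^ m * y ^ n)"

text \<open>The system xdot = -y + P(x,y), ydot = x + Q(x,y) is linearizable at the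
  origin: there is an analytic change of coordinates
  x1 = x + sum_{m+n>=2} c_mn x^m y^n, y1 = y + sum_{m+n>=2} d_mn x^m y^n,
  given by double power series converging (absolutely) on a polydisc around 0,
  such that along the vector field (Lie derivative) xdot1 = -y1 and ydot1 = x1.\<close>
definition linearizable ::
  "(complex \<Rightarrow> complex \<Rightarrow> complex) \<Rightarrow> (complex \<Rightarrow> complex \<Rightarrow> complex) \<Rightarrow> bool" where
  "linearizable P Q \<longleftrightarrow>
    (\<exists>c d :: nat \<Rightarrow> nat \<Rightarrow> complex. \<exists>r>0.
       c 0 0 = 0 \<and> c 1 0 = 1 \<and> c 0 1 = 0 \<and>
       d 0 0 = 0 \<and> d 1 0 = 0 \<and> d 0 1 = 1 \<and>
       (\<forall>x y. cmod x < r \<and> cmod y < r \<longrightarrow>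
          (\<lambda>(m,n). c m n * x ^ m * y ^ n) summable_on UNIV \<and>
          (\<lambda>(m,n). d m n * x ^ m * y ^ n) summable_on UNIV \<and>
          ((\<lambda>t. dps c (x + t * (- y + P x y)) (y + t * (x + Q x y)))
              has_field_derivative (- dps d x y)) (at 0) \<and>
          ((\<lambda>t. dps d (x + t * (- y + P x y)) (y + t * (x + Q x y)))
              has_field_derivative (dps c x y)) (at 0)))"

end

theory Submission
  imports Defs
begin

text \<open>Each system is linearized by explicit coordinates.
  In cases 2--4 they are rational, \<open>X = N\<^sub>X / D\<close> and \<open>Y = N\<^sub>Y / D\<close> with polynomials
  \<open>N\<^sub>X, N\<^sub>Y, D\<close> and \<open>D(0,0) = 1\<close>, and the linearization equations \<open>X' = -Y\<close>, \<open>Y' = X\<close>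
  reduce to polynomial identities (in case 4 modulo \<open>4 b\<^sub>1\<^sub>1\<^sup>2 + 25 b\<^sub>2\<^sub>0\<^sup>2 = 0\<close>).
  In case 1 the nonlinearity is \<open>b (x + j y)\<^sup>2\<close> with \<open>j\<^sup>2 = -1\<close>; then \<open>z = x + j y\<close> satisfies
  \<open>z' = j z (1 + b z)\<close>, so \<open>Z = z / (1 + b z)\<close> satisfies \<open>Z' = j Z\<close>, and \<open>W = x - j y + \<psi>(z)\<close>
  satisfies \<open>W' = -j W\<close> once \<open>\<psi>\<close> solves \<open>z (1 + b z) \<psi>' + \<psi> = b z\<^sup>2\<close>, which has a
  convergent power series solution; then \<open>X = (Z + W) / 2\<close> and \<open>Y = j (W - Z) / 2\<close>.

  Analyticity is handled by double power series converging absolutely on polydiscs. They are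
  closed under sums and Cauchy products, and under substitution into a one-variable power series
  with positive radius, by a majorant estimate on a smaller polydisc; this yields the expansions
  of \<open>1 / D\<close> and of \<open>\<psi>(z)\<close>.\<close>

section \<open>Double power series\<close>

definition dps_term :: "(nat \<Rightarrow> nat \<Rightarrow> complex) \<Rightarrow> complex \<Rightarrow> complex \<Rightarrow> nat \<times> nat \<Rightarrow> complex" where
  "dps_term c x y = (\<lambda>(m, n). c m n * x ^ m * y ^ n)"

definition dps_norm :: "(nat \<Rightarrow> nat \<Rightarrow> complex) \<Rightarrow> complex \<Rightarrow> complex \<Rightarrow> real" where
  "dps_norm c x y = (\<Sum>\<^sub>\<infinity>q. norm (dps_term c x y q))"

definition dps_expansion :: "real \<Rightarrow> (nat \<Rightarrow> nat \<Rightarrow> complex) \<Rightarrow> (complex \<Rightarrow> complex \<Rightarrow> complex) \<Rightarrow> bool" where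
  "dps_expansion r c F \<longleftrightarrow>
     (\<forall>x y. cmod x < r \<longrightarrow> cmod y < r \<longrightarrow> (\<lambda>q. norm (dps_term c x y q)) summable_on UNIV \<and> dps c x y = F x y)"

definition dps_monom :: "nat \<Rightarrow> nat \<Rightarrow> nat \<Rightarrow> nat \<Rightarrow> complex" where
  "dps_monom a b m n = (if m = a \<and> n = b then 1 else 0)"

definition dps_mult :: "(nat \<Rightarrow> nat \<Rightarrow> complex) \<Rightarrow> (nat \<Rightarrow> nat \<Rightarrow> complex) \<Rightarrow> nat \<Rightarrow> nat \<Rightarrow> complex" where
  "dps_mult c d M N = (\<Sum>i\<le>M. \<Sum>j\<le>N. c i j * d (M - i) (N - j))"

lemma dps_eq_infsum: "dps c x y = (\<Sum>\<^sub>\<infinity>q. dps_term c x y q)"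
  unfolding dps_def dps_term_def by simp

lemma dps_norm_nonneg: "0 \<le> dps_norm c x y"
  unfolding dps_norm_def by (rule infsum_nonneg) auto

lemma norm_dps_le_dps_norm:
  "(\<lambda>q. norm (dps_term c x y q)) summable_on UNIV \<Longrightarrow> cmod (dps c x y) \<le> dps_norm c x y"
  unfolding dps_eq_infsum dps_norm_def by (rule norm_infsum_bound)

lemma abs_summable_tensor:
  fixes f g :: "'a \<Rightarrow> 'b::{banach, real_normed_field}"
  assumes f: "(\<lambda>p. norm (f p)) summable_on UNIV" and g: "(\<lambda>q. norm (g q)) summable_on UNIV"
  shows "(\<lambda>z. norm (f (fst z) * g (snd z))) summable_on UNIV"
    and "(\<Sum>\<^sub>\<infinity>z. f (fst z) * g (snd z)) = (\<Sum>\<^sub>\<infinity>p. f p) * (\<Sum>\<^sub>\<infinity>q. g q)"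
    and "(\<Sum>\<^sub>\<infinity>z. norm (f (fst z) * g (snd z))) = (\<Sum>\<^sub>\<infinity>p. norm (f p)) * (\<Sum>\<^sub>\<infinity>q. norm (g q))"
proof -
  let ?Sg = "\<Sum>\<^sub>\<infinity>q. norm (g q)"
  have inner: "((\<lambda>q. norm (f p) * norm (g q)) has_sum norm (f p) * ?Sg) UNIV" for p
    using g by (intro has_sum_cmult_right has_sum_infsum)
  have outer: "(\<lambda>p. norm (f p) * ?Sg) summable_on UNIV"
    using f by (intro summable_on_cmult_left)
  have "(\<lambda>(p, q). norm (f p) * norm (g q)) summable_on Sigma UNIV (\<lambda>_. UNIV)"
    by (rule summable_on_SigmaI[where g="\<lambda>p. norm (f p) * ?Sg"]) (use inner outer in auto)
  then show fg: "(\<lambda>z. norm (f (fst z) * g (snd z))) summable_on UNIV"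
    by (simp add: case_prod_unfold norm_mult)
  have "(\<Sum>\<^sub>\<infinity>z. f (fst z) * g (snd z)) = (\<Sum>\<^sub>\<infinity>p. \<Sum>\<^sub>\<infinity>q. f p * g q)"
    using infsum_Sigma'_banach[of "\<lambda>p q. f p * g q" UNIV "\<lambda>_. UNIV"] abs_summable_summable[OF fg]
    by (simp add: case_prod_unfold)
  also have "\<dots> = (\<Sum>\<^sub>\<infinity>p. f p) * (\<Sum>\<^sub>\<infinity>q. g q)"
    by (simp add: infsum_cmult_right' infsum_cmult_left')
  finally show "(\<Sum>\<^sub>\<infinity>z. f (fst z) * g (snd z)) = (\<Sum>\<^sub>\<infinity>p. f p) * (\<Sum>\<^sub>\<infinity>q. g q)" .
  have "(\<Sum>\<^sub>\<infinity>z. norm (f (fst z) * g (snd z))) = (\<Sum>\<^sub>\<infinity>p. \<Sum>\<^sub>\<infinity>q. norm (f p) * norm (g q))"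
    using infsum_Sigma'_banach[of "\<lambda>p q. norm (f p) * norm (g q)" UNIV "\<lambda>_. UNIV"] fg
    by (simp add: norm_mult case_prod_unfold)
  also have "\<dots> = (\<Sum>\<^sub>\<infinity>p. norm (f p)) * ?Sg"
    by (simp add: infsum_cmult_right' infsum_cmult_left')
  finally show "(\<Sum>\<^sub>\<infinity>z. norm (f (fst z) * g (snd z))) = (\<Sum>\<^sub>\<infinity>p. norm (f p)) * ?Sg" .
qed

lemma antidiagonal_sums:
  fixes H :: "(nat \<times> nat) \<times> (nat \<times> nat) \<Rightarrow> 'a::banach"
  assumes H: "(\<lambda>z. norm (H z)) summable_on UNIV"
  defines "S \<equiv> \<lambda>(M, N). \<Sum>(i, j)\<in>{..M} \<times> {..N}. H ((i, j), (M - i, N - j))"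
  shows "(\<lambda>MN. norm (S MN)) summable_on UNIV"
    and "(\<Sum>\<^sub>\<infinity>MN. S MN) = (\<Sum>\<^sub>\<infinity>z. H z)"
    and "(\<Sum>\<^sub>\<infinity>MN. norm (S MN)) \<le> (\<Sum>\<^sub>\<infinity>z. norm (H z))"
proof -
  define B where "B MN = {..fst MN} \<times> {..snd MN}" for MN :: "nat \<times> nat"
  define \<iota> where "\<iota> = (\<lambda>(MN :: nat \<times> nat, ij :: nat \<times> nat). (ij, (fst MN - fst ij, snd MN - snd ij)))"
  have bij: "bij_betw \<iota> (Sigma UNIV B) UNIV"
    by (rule bij_betw_byWitness[where f'="\<lambda>((m, n), (m', n')). ((m + m', n + n'), (m, n))"])
       (auto simp: B_def \<iota>_def)
  have S: "S MN = (\<Sum>ij\<in>B MN. H (\<iota> (MN, ij)))" for MN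
    by (cases MN) (simp add: S_def B_def \<iota>_def case_prod_unfold)
  have nH: "(\<lambda>z. norm (H (\<iota> z))) summable_on Sigma UNIV B"
    using summable_on_reindex_bij_betw[OF bij, of "\<lambda>z. norm (H z)"] H by simp
  have sH: "(\<lambda>z. H (\<iota> z)) summable_on Sigma UNIV B"
    using summable_on_reindex_bij_betw[OF bij, of H] abs_summable_summable[OF H] by simp
  have outer_norm: "(\<lambda>MN. \<Sum>ij\<in>B MN. norm (H (\<iota> (MN, ij)))) summable_on UNIV"
    using summable_on_Sigma_banach[of "\<lambda>MN ij. norm (H (\<iota> (MN, ij)))" UNIV B] nH
    by (simp add: B_def case_prod_unfold)
  have S_le: "norm (S MN) \<le> (\<Sum>ij\<in>B MN. norm (H (\<iota> (MN, ij))))" for MN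
    unfolding S by (rule norm_sum)
  show S_abs: "(\<lambda>MN. norm (S MN)) summable_on UNIV"
    by (rule summable_on_comparison_test[OF outer_norm]) (use S_le in auto)
  have "(\<Sum>\<^sub>\<infinity>MN. S MN) = (\<Sum>\<^sub>\<infinity>z\<in>Sigma UNIV B. H (\<iota> z))"
    using infsum_Sigma'_banach[of "\<lambda>MN ij. H (\<iota> (MN, ij))" UNIV B] sH
    by (simp add: S B_def case_prod_unfold)
  also have "\<dots> = (\<Sum>\<^sub>\<infinity>z. H z)"
    using infsum_reindex_bij_betw[OF bij, of H] by simp
  finally show "(\<Sum>\<^sub>\<infinity>MN. S MN) = (\<Sum>\<^sub>\<infinity>z. H z)" .
  have "(\<Sum>\<^sub>\<infinity>MN. norm (S MN)) \<le> (\<Sum>\<^sub>\<infinity>MN. \<Sum>ij\<in>B MN. norm (H (\<iota> (MN, ij))))"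
    by (rule infsum_mono[OF S_abs outer_norm S_le])
  also have "\<dots> = (\<Sum>\<^sub>\<infinity>z\<in>Sigma UNIV B. norm (H (\<iota> z)))"
    using infsum_Sigma'_banach[of "\<lambda>MN ij. norm (H (\<iota> (MN, ij)))" UNIV B] nH
    by (simp add: B_def case_prod_unfold)
  also have "\<dots> = (\<Sum>\<^sub>\<infinity>z. norm (H z))"
    using infsum_reindex_bij_betw[OF bij, of "\<lambda>z. norm (H z)"] by simp
  finally show "(\<Sum>\<^sub>\<infinity>MN. norm (S MN)) \<le> (\<Sum>\<^sub>\<infinity>z. norm (H z))" .
qed

lemma dps_term_mult_antidiagonal:
  "(\<Sum>(i, j)\<in>{..M} \<times> {..N}. dps_term c x y (i, j) * dps_term d x y (M - i, N - j))
     = dps_term (dps_mult c d) x y (M, N)"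
proof -
  have "dps_term c x y (i, j) * dps_term d x y (M - i, N - j) = c i j * d (M - i) (N - j) * x ^ M * y ^ N"
    if "i \<le> M" "j \<le> N" for i j
  proof -
    have "x ^ i * x ^ (M - i) = x ^ M" "y ^ j * y ^ (N - j) = y ^ N"
      using that by (simp_all flip: power_add)
    then show ?thesis by (simp add: dps_term_def) (metis (no_types, lifting) mult.assoc mult.left_commute)
  qed
  then have "(\<Sum>(i, j)\<in>{..M} \<times> {..N}. dps_term c x y (i, j) * dps_term d x y (M - i, N - j))
      = (\<Sum>(i, j)\<in>{..M} \<times> {..N}. c i j * d (M - i) (N - j) * x ^ M * y ^ N)"
    by (intro sum.cong) auto
  also have "\<dots> = dps_term (dps_mult c d) x y (M, N)"
    by (simp add: dps_term_def dps_mult_def sum.cartesian_product[symmetric] sum_distrib_right)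
  finally show ?thesis .
qed

lemma dps_mult_pointwise:
  assumes c: "(\<lambda>q. norm (dps_term c x y q)) summable_on UNIV"
    and d: "(\<lambda>q. norm (dps_term d x y q)) summable_on UNIV"
  shows "(\<lambda>q. norm (dps_term (dps_mult c d) x y q)) summable_on UNIV"
    and "dps (dps_mult c d) x y = dps c x y * dps d x y"
    and "dps_norm (dps_mult c d) x y \<le> dps_norm c x y * dps_norm d x y"
proof -
  define H where "H z = dps_term c x y (fst z) * dps_term d x y (snd z)" for z
  note tensor = abs_summable_tensor[OF c d, folded H_def]
  have S: "(\<lambda>(M, N). \<Sum>(i, j)\<in>{..M} \<times> {..N}. H ((i, j), (M - i, N - j))) = dps_term (dps_mult c d) x y"
    by (auto simp: H_def dps_term_mult_antidiagonal)
  note anti = antidiagonal_sums[OF tensor(1), unfolded S]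
  show "(\<lambda>q. norm (dps_term (dps_mult c d) x y q)) summable_on UNIV"
    by (rule anti(1))
  show "dps (dps_mult c d) x y = dps c x y * dps d x y"
    using anti(2) tensor(2) by (simp add: dps_eq_infsum H_def)
  show "dps_norm (dps_mult c d) x y \<le> dps_norm c x y * dps_norm d x y"
    using anti(3) tensor(3) by (simp add: dps_norm_def H_def case_prod_unfold)
qed

lemma dps_monom_pointwise:
  shows "(\<lambda>q. norm (dps_term (dps_monom a b) x y q)) summable_on UNIV"
    and "dps (dps_monom a b) x y = x ^ a * y ^ b"
    and "dps_norm (dps_monom a b) x y = norm (x ^ a * y ^ b)"
proof -
  have terms: "dps_term (dps_monom a b) x y q = (if q = (a, b) then x ^ a * y ^ b else 0)" for q
    by (cases q) (auto simp: dps_term_def dps_monom_def)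
  have "finite {q. norm (dps_term (dps_monom a b) x y q) \<noteq> 0}"
    by (rule finite_subset[of _ "{(a, b)}"]) (auto simp: terms split: if_splits)
  then show "(\<lambda>q. norm (dps_term (dps_monom a b) x y q)) summable_on UNIV"
    by (intro finite_nonzero_values_imp_summable_on) simp
  have "dps (dps_monom a b) x y = (\<Sum>\<^sub>\<infinity>q\<in>{(a, b)}. dps_term (dps_monom a b) x y q)"
    unfolding dps_eq_infsum by (rule infsum_cong_neutral) (auto simp: terms)
  then show "dps (dps_monom a b) x y = x ^ a * y ^ b"
    by (simp add: terms)
  have "dps_norm (dps_monom a b) x y = (\<Sum>\<^sub>\<infinity>q\<in>{(a, b)}. norm (dps_term (dps_monom a b) x y q))"
    unfolding dps_norm_def by (rule infsum_cong_neutral) (auto simp: terms)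
  then show "dps_norm (dps_monom a b) x y = norm (x ^ a * y ^ b)"
    by (simp add: terms)
qed

lemma dps_expansion_monom: "dps_expansion r (dps_monom a b) (\<lambda>x y. x ^ a * y ^ b)"
  using dps_monom_pointwise by (auto simp: dps_expansion_def)

lemma dps_expansion_add:
  assumes "dps_expansion r c F" "dps_expansion r d G"
  shows "dps_expansion r (\<lambda>m n. c m n + d m n) (\<lambda>x y. F x y + G x y)"
  unfolding dps_expansion_def
proof (intro allI impI conjI)
  fix x y :: complex assume xy: "cmod x < r" "cmod y < r"
  have c: "(\<lambda>q. norm (dps_term c x y q)) summable_on UNIV"
   and d: "(\<lambda>q. norm (dps_term d x y q)) summable_on UNIV"
    using assms xy by (auto simp: dps_expansion_def)
  have terms: "dps_term (\<lambda>m n. c m n + d m n) x y q = dps_term c x y q + dps_term d x y q" for q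
    by (simp add: dps_term_def case_prod_unfold distrib_right)
  show "(\<lambda>q. norm (dps_term (\<lambda>m n. c m n + d m n) x y q)) summable_on UNIV"
    by (rule summable_on_comparison_test[OF summable_on_add[OF c d]]) (simp_all add: terms norm_triangle_ineq)
  have "dps (\<lambda>m n. c m n + d m n) x y = dps c x y + dps d x y"
    using abs_summable_summable[OF c] abs_summable_summable[OF d]
    by (simp add: dps_eq_infsum terms infsum_add)
  then show "dps (\<lambda>m n. c m n + d m n) x y = F x y + G x y"
    using assms xy by (simp add: dps_expansion_def)
qed

lemma dps_expansion_scale:
  assumes "dps_expansion r c F"
  shows "dps_expansion r (\<lambda>m n. a * c m n) (\<lambda>x y. a * F x y)"
  unfolding dps_expansion_def
proof (intro allI impI conjI)
  fix x y :: complex assume xy: "cmod x < r" "cmod y < r"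
  have c: "(\<lambda>q. norm (dps_term c x y q)) summable_on UNIV"
    using assms xy by (auto simp: dps_expansion_def)
  have terms: "dps_term (\<lambda>m n. a * c m n) x y q = a * dps_term c x y q" for q
    by (simp add: dps_term_def case_prod_unfold mult.assoc)
  show "(\<lambda>q. norm (dps_term (\<lambda>m n. a * c m n) x y q)) summable_on UNIV"
    using summable_on_cmult_right[OF c, of "norm a"] by (simp add: terms norm_mult)
  show "dps (\<lambda>m n. a * c m n) x y = a * F x y"
    using assms xy by (simp add: dps_eq_infsum terms infsum_cmult_right' dps_expansion_def)
qed

lemma dps_expansion_mult:
  assumes "dps_expansion r c F" "dps_expansion r d G"
  shows "dps_expansion r (dps_mult c d) (\<lambda>x y. F x y * G x y)"
  using assms dps_mult_pointwise unfolding dps_expansion_def by metis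

lemma dps_expansion_mono: "dps_expansion r c F \<Longrightarrow> r' \<le> r \<Longrightarrow> dps_expansion r' c F"
  unfolding dps_expansion_def by auto

lemma dps_expansion_cong:
  "dps_expansion r c F \<Longrightarrow> (\<And>x y. cmod x < r \<Longrightarrow> cmod y < r \<Longrightarrow> F x y = G x y) \<Longrightarrow> dps_expansion r c G"
  unfolding dps_expansion_def by auto

lemmas dps_expansion_intros = dps_expansion_add dps_expansion_scale dps_expansion_monom

lemma dps_mult_00: "dps_mult c d 0 0 = c 0 0 * d 0 0"
  and dps_mult_10: "dps_mult c d 1 0 = c 0 0 * d 1 0 + c 1 0 * d 0 0"
  and dps_mult_01: "dps_mult c d 0 1 = c 0 0 * d 0 1 + c 0 1 * d 0 0"
  by (simp_all add: dps_mult_def)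

fun dps_power :: "(nat \<Rightarrow> nat \<Rightarrow> complex) \<Rightarrow> nat \<Rightarrow> nat \<Rightarrow> nat \<Rightarrow> complex" where
  "dps_power p 0 = dps_monom 0 0"
| "dps_power p (Suc k) = dps_mult p (dps_power p k)"

lemma dps_power_pointwise:
  assumes p: "(\<lambda>q. norm (dps_term p x y q)) summable_on UNIV"
  shows "(\<lambda>q. norm (dps_term (dps_power p k) x y q)) summable_on UNIV
      \<and> dps (dps_power p k) x y = dps p x y ^ k
      \<and> dps_norm (dps_power p k) x y \<le> dps_norm p x y ^ k"
proof (induction k)
  case 0
  then show ?case using dps_monom_pointwise[of 0 0 x y] by simp
next
  case (Suc k)
  note mult = dps_mult_pointwise[OF p Suc[THEN conjunct1]]
  have "dps_norm (dps_mult p (dps_power p k)) x y \<le> dps_norm p x y * dps_norm (dps_power p k) x y"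
    by (rule mult(3))
  also have "\<dots> \<le> dps_norm p x y * dps_norm p x y ^ k"
    using Suc dps_norm_nonneg by (intro mult_left_mono) auto
  finally show ?case using mult Suc by simp
qed

lemma dps_power_eq_0: "p 0 0 = 0 \<Longrightarrow> m + n < k \<Longrightarrow> dps_power p k m n = 0"
proof (induction k arbitrary: m n)
  case (Suc k)
  have "p i j * dps_power p k (m - i) (n - j) = 0" if "i \<le> m" "j \<le> n" for i j
    using Suc that by (cases "i = 0 \<and> j = 0") auto
  then show ?case by (auto simp: dps_mult_def intro!: sum.neutral)
qed simp

text \<open>Coefficients of \<open>\<Sum>k. a k * p\<^sup>k\<close>; truncating at \<open>k \<le> m + n\<close> is exact only when
  \<open>p 0 0 = 0\<close> (\<open>dps_power_eq_0\<close>).\<close>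
definition dps_compose :: "(nat \<Rightarrow> complex) \<Rightarrow> (nat \<Rightarrow> nat \<Rightarrow> complex) \<Rightarrow> nat \<Rightarrow> nat \<Rightarrow> complex" where
  "dps_compose a p m n = (\<Sum>k\<le>m + n. a k * dps_power p k m n)"

lemma dps_compose_00: "dps_compose a p 0 0 = a 0"
  and dps_compose_10: "dps_compose a p 1 0 = a 1 * p 1 0"
  and dps_compose_01: "dps_compose a p 0 1 = a 1 * p 0 1"
  by (simp_all add: dps_compose_def dps_mult_def dps_monom_def)

lemma dps_power_family_abs_summable:
  assumes p: "(\<lambda>q. norm (dps_term p x y q)) summable_on UNIV"
    and \<rho>: "dps_norm p x y \<le> \<rho>" and a: "summable (\<lambda>k. norm (a k) * \<rho> ^ k)"
  shows "(\<lambda>z. norm (a (fst z) * dps_term (dps_power p (fst z)) x y (snd z))) summable_on UNIV"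
proof -
  note power = dps_power_pointwise[OF p]
  have inner: "((\<lambda>q. norm (a k * dps_term (dps_power p k) x y q))
      has_sum norm (a k) * dps_norm (dps_power p k) x y) UNIV" for k
    unfolding dps_norm_def using power[of k] by (simp add: norm_mult has_sum_cmult_right has_sum_infsum)
  have "(\<lambda>k. norm (a k) * \<rho> ^ k) summable_on UNIV"
    using a \<rho> dps_norm_nonneg[of p x y] by (subst summable_on_UNIV_nonneg_real_iff) auto
  then have outer: "(\<lambda>k. norm (a k) * dps_norm (dps_power p k) x y) summable_on UNIV"
  proof (rule summable_on_comparison_test)
    fix k :: nat
    have "dps_norm (dps_power p k) x y \<le> dps_norm p x y ^ k" using power by blast
    also have "\<dots> \<le> \<rho> ^ k" using \<rho> dps_norm_nonneg by (intro power_mono) auto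
    finally show "norm (a k) * dps_norm (dps_power p k) x y \<le> norm (a k) * \<rho> ^ k"
      by (simp add: mult_left_mono)
  qed (simp add: dps_norm_nonneg)
  have "(\<lambda>z. norm (a (fst z) * dps_term (dps_power p (fst z)) x y (snd z))) summable_on Sigma UNIV (\<lambda>_. UNIV)"
    by (rule summable_on_SigmaI[where g="\<lambda>k. norm (a k) * dps_norm (dps_power p k) x y"])
       (use inner outer in auto)
  then show ?thesis by simp
qed

lemma dps_compose_pointwise:
  assumes p00: "p 0 0 = 0" and p: "(\<lambda>q. norm (dps_term p x y q)) summable_on UNIV"
    and \<rho>: "dps_norm p x y \<le> \<rho>" and a: "summable (\<lambda>k. norm (a k) * \<rho> ^ k)"
  shows "(\<lambda>q. norm (dps_term (dps_compose a p) x y q)) summable_on UNIV"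
    and "dps (dps_compose a p) x y = (\<Sum>k. a k * dps p x y ^ k)"
proof -
  define U where "U k q = a k * dps_term (dps_power p k) x y q" for k q
  have U_abs: "(\<lambda>z. norm (U (fst z) (snd z))) summable_on UNIV"
    using dps_power_family_abs_summable[OF p \<rho> a] by (simp add: U_def)
  then have U_sum: "(\<lambda>z. U (fst z) (snd z)) summable_on UNIV"
    by (rule abs_summable_summable)
  have row: "(\<Sum>\<^sub>\<infinity>q. U k q) = a k * dps p x y ^ k" for k
    using dps_power_pointwise[OF p, of k] by (simp add: U_def infsum_cmult_right' dps_eq_infsum)
  have column: "U k (m, n) = 0" if "m + n < k" for k m n
    using dps_power_eq_0[of p m n k, OF p00 that] by (simp add: U_def dps_term_def)
  have column_finite: "(\<Sum>\<^sub>\<infinity>k. f (U k q)) = (\<Sum>k\<le>fst q + snd q. f (U k q))"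
    if "f 0 = 0" for f :: "complex \<Rightarrow> 'b::{comm_monoid_add, t2_space}" and q
    by (subst infsum_cong_neutral[where T="{..fst q + snd q}"]) (use column[of "fst q" "snd q"] that in auto)
  have column_sum: "(\<Sum>\<^sub>\<infinity>k. U k q) = dps_term (dps_compose a p) x y q" for q
    using column_finite[of "\<lambda>u. u" q]
    by (cases q) (simp add: U_def dps_term_def dps_compose_def sum_distrib_right mult.assoc)
  have column_norm: "norm (dps_term (dps_compose a p) x y q) \<le> (\<Sum>\<^sub>\<infinity>k. norm (U k q))" for q
    using column_finite[of "\<lambda>u. u" q] column_finite[of norm q] column_sum[of q] norm_sum by simp
  have "(\<lambda>q. \<Sum>\<^sub>\<infinity>k. norm (U k q)) summable_on UNIV"
    using summable_on_Sigma_banach[of "\<lambda>q k. norm (U k q)" UNIV "\<lambda>_. UNIV"]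
      U_abs summable_on_swap[of "\<lambda>z. norm (U (fst z) (snd z))" UNIV UNIV]
    by (simp add: case_prod_unfold)
  then show "(\<lambda>q. norm (dps_term (dps_compose a p) x y q)) summable_on UNIV"
    by (rule summable_on_comparison_test) (use column_norm in auto)
  have rows: "(\<lambda>k. a k * dps p x y ^ k) summable_on UNIV"
    using summable_on_Sigma_banach[of "\<lambda>k q. U k q" UNIV "\<lambda>_. UNIV"] U_sum row by (simp add: case_prod_unfold)
  have "dps (dps_compose a p) x y = (\<Sum>\<^sub>\<infinity>q. \<Sum>\<^sub>\<infinity>k. U k q)"
    by (simp add: dps_eq_infsum column_sum)
  also have "\<dots> = (\<Sum>\<^sub>\<infinity>k. \<Sum>\<^sub>\<infinity>q. U k q)"
    by (rule infsum_swap_banach[symmetric]) (use U_sum in \<open>simp add: case_prod_unfold\<close>)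
  also have "\<dots> = (\<Sum>k. a k * dps p x y ^ k)"
    using row sums_unique[OF has_sum_imp_sums[OF has_sum_infsum[OF rows]]] by simp
  finally show "dps (dps_compose a p) x y = (\<Sum>k. a k * dps p x y ^ k)" .
qed

lemma dps_norm_le_scaled:
  assumes p00: "p 0 0 = 0" and P: "dps_expansion r p P" and r0: "0 < r0" "r0 < r"
    and s: "s \<le> r0" "cmod x \<le> s" "cmod y \<le> s"
  shows "dps_norm p x y \<le> s / r0 * dps_norm p r0 r0"
proof -
  have s0: "0 \<le> s" using s norm_ge_zero order_trans by blast
  have xy: "(\<lambda>q. norm (dps_term p x y q)) summable_on UNIV"
   and r0r0: "(\<lambda>q. norm (dps_term p r0 r0 q)) summable_on UNIV"
    using P s r0 by (auto simp: dps_expansion_def)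
  have termwise: "norm (dps_term p x y q) \<le> s / r0 * norm (dps_term p r0 r0 q)" for q
  proof (cases q)
    case (Pair m n)
    show ?thesis
    proof (cases "m + n = 0")
      case True then show ?thesis using p00 Pair by (simp add: dps_term_def)
    next
      case False
      define t where "t = s / r0"
      have t: "0 \<le> t" "t \<le> 1" using s0 s r0 by (auto simp: t_def)
      have "cmod x ^ m * cmod y ^ n \<le> s ^ m * s ^ n"
        using s s0 by (intro mult_mono power_mono) auto
      also have "\<dots> = t ^ (m + n) * r0 ^ (m + n)"
        using r0 by (simp add: t_def power_add power_divide)
      also have "\<dots> \<le> t * r0 ^ (m + n)"
        using t False power_decreasing[of 1 "m + n" t] r0 by (intro mult_right_mono) auto
      finally have "cmod x ^ m * cmod y ^ n \<le> t * (r0 ^ m * r0 ^ n)" by (simp add: power_add)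
      then have "cmod (p m n) * (cmod x ^ m * cmod y ^ n) \<le> cmod (p m n) * (t * (r0 ^ m * r0 ^ n))"
        by (intro mult_left_mono) auto
      then show ?thesis using r0
        by (simp add: Pair dps_term_def norm_mult norm_power t_def mult_ac)
    qed
  qed
  have "dps_norm p x y \<le> (\<Sum>\<^sub>\<infinity>q. s / r0 * norm (dps_term p r0 r0 q))"
    unfolding dps_norm_def by (rule infsum_mono[OF xy summable_on_cmult_right[OF r0r0] termwise])
  also have "\<dots> = s / r0 * dps_norm p r0 r0"
    unfolding dps_norm_def by (rule infsum_cmult_right')
  finally show ?thesis .
qed

lemma dps_expansion_compose:
  assumes P: "dps_expansion r p P" and p00: "p 0 0 = 0" and r: "0 < r" and \<rho>: "0 < \<rho>"
    and a: "summable (\<lambda>k. norm (a k) * \<rho> ^ k)"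
  obtains r' where "0 < r'" "r' \<le> r" "dps_expansion r' (dps_compose a p) (\<lambda>x y. \<Sum>k. a k * P x y ^ k)"
    and "\<And>x y. cmod x < r' \<Longrightarrow> cmod y < r' \<Longrightarrow> cmod (P x y) < \<rho>"
proof -
  define r0 where "r0 = r / 2"
  define K where "K = dps_norm p r0 r0"
  define r' where "r' = min r0 (\<rho> * r0 / (2 * (K + 1)))"
  have K: "0 \<le> K" unfolding K_def by (rule dps_norm_nonneg)
  have r0: "0 < r0" "r0 < r" using r by (auto simp: r0_def)
  have r': "0 < r'" "r' \<le> r" using r0 \<rho> K by (auto simp: r'_def)
  have small: "dps_norm p x y < \<rho>" if xy: "cmod x < r'" "cmod y < r'" for x y
  proof -
    define s where "s = max (cmod x) (cmod y)"
    have s: "s \<le> r0" "cmod x \<le> s" "cmod y \<le> s" "s \<le> \<rho> * r0 / (2 * (K + 1))"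
      using xy by (auto simp: s_def r'_def)
    have "s / r0 \<le> \<rho> / (2 * (K + 1))"
      using s(4) r0 K by (simp add: field_simps)
    then have "s / r0 * K \<le> \<rho> / (2 * (K + 1)) * K"
      using K by (rule mult_right_mono)
    also have "\<dots> < \<rho>"
      using K \<rho> by (auto simp: field_simps intro!: add_nonneg_pos)
    finally show ?thesis
      using dps_norm_le_scaled[OF p00 P r0 s(1-3)] by (simp add: K_def)
  qed
  show ?thesis
  proof (rule that[OF r'])
    show "dps_expansion r' (dps_compose a p) (\<lambda>x y. \<Sum>k. a k * P x y ^ k)"
      unfolding dps_expansion_def
    proof (intro allI impI)
      fix x y assume xy: "cmod x < r'" "cmod y < r'"
      then have "cmod x < r" "cmod y < r" using r' by auto
      then have p: "(\<lambda>q. norm (dps_term p x y q)) summable_on UNIV" and Pxy: "dps p x y = P x y"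
        using P by (auto simp: dps_expansion_def)
      show "(\<lambda>q. norm (dps_term (dps_compose a p) x y q)) summable_on UNIV
          \<and> dps (dps_compose a p) x y = (\<Sum>k. a k * P x y ^ k)"
        using dps_compose_pointwise[OF p00 p less_imp_le[OF small[OF xy]] a] Pxy by simp
    qed
    show "cmod (P x y) < \<rho>" if "cmod x < r'" "cmod y < r'" for x y
    proof -
      have "cmod x < r" "cmod y < r" using that r' by auto
      then have "cmod (P x y) \<le> dps_norm p x y"
        using P norm_dps_le_dps_norm by (force simp: dps_expansion_def)
      then show ?thesis using small[OF that] by simp
    qed
  qed
qed

lemma dps_expansion_inverse:
  assumes D: "dps_expansion r d D" and d00: "d 0 0 = 1" and r: "0 < r"
  obtains r' g where "0 < r'" "r' \<le> r" "g 0 0 = 1" "dps_expansion r' g (\<lambda>x y. 1 / D x y)"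
    and "\<And>x y. cmod x < r' \<Longrightarrow> cmod y < r' \<Longrightarrow> D x y \<noteq> 0"
proof -
  define p where "p m n = dps_monom 0 0 m n + (- 1) * d m n" for m n
  have P: "dps_expansion r p (\<lambda>x y. 1 - D x y)"
    unfolding p_def
    by (rule dps_expansion_cong[OF dps_expansion_add[OF dps_expansion_monom dps_expansion_scale[OF D]]])
       simp
  have p00: "p 0 0 = 0" by (simp add: p_def dps_monom_def d00)
  have geometric: "summable (\<lambda>k. norm ((\<lambda>_. 1 :: complex) k) * (1 / 2 :: real) ^ k)"
    by (simp add: summable_geometric)
  obtain r' where r': "0 < r'" "r' \<le> r"
    and G: "dps_expansion r' (dps_compose (\<lambda>_. 1) p) (\<lambda>x y. \<Sum>k. 1 * (1 - D x y) ^ k)"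
    and small: "\<And>x y. cmod x < r' \<Longrightarrow> cmod y < r' \<Longrightarrow> cmod (1 - D x y) < 1 / 2"
    by (rule dps_expansion_compose[OF P p00 r _ geometric]) auto
  show ?thesis
  proof (rule that[where g="dps_compose (\<lambda>_. 1) p", OF r'])
    show "dps_compose (\<lambda>_. 1) p 0 0 = 1" by (simp add: dps_compose_00)
    show "D x y \<noteq> 0" if "cmod x < r'" "cmod y < r'" for x y
      using small[OF that] by auto
    show "dps_expansion r' (dps_compose (\<lambda>_. 1) p) (\<lambda>x y. 1 / D x y)"
    proof (rule dps_expansion_cong[OF G])
      fix x y :: complex assume "cmod x < r'" "cmod y < r'"
      then have "cmod (1 - D x y) < 1" using small by fastforce
      then show "(\<Sum>k. 1 * (1 - D x y) ^ k) = 1 / D x y"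
        using suminf_geometric[of "1 - D x y"] by simp
    qed
  qed
qed

section \<open>Linearization by explicit coordinates\<close>

definition has_lie_deriv ::
  "(complex \<Rightarrow> complex \<Rightarrow> complex) \<Rightarrow> (complex \<Rightarrow> complex \<Rightarrow> complex) \<Rightarrow>
    (complex \<Rightarrow> complex \<Rightarrow> complex) \<Rightarrow> complex \<Rightarrow> complex \<Rightarrow> complex \<Rightarrow> bool" where
  "has_lie_deriv P Q F L x y \<longleftrightarrow>
     ((\<lambda>t. F (x + t * (- y + P x y)) (y + t * (x + Q x y))) has_field_derivative L) (at 0)"

lemma has_lie_deriv_divide:
  assumes "has_lie_deriv P Q N LN x y" "has_lie_deriv P Q D LD x y" "D x y \<noteq> 0"
  shows "has_lie_deriv P Q (\<lambda>x y. N x y / D x y) ((LN * D x y - N x y * LD) / (D x y)\<^sup>2) x y"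
proof -
  have "(\<lambda>t. D (x + t * (- y + P x y)) (y + t * (x + Q x y))) 0 \<noteq> 0"
    using assms(3) by simp
  from DERIV_divide[OF assms(1,2)[unfolded has_lie_deriv_def] this] show ?thesis
    unfolding has_lie_deriv_def by (simp add: power2_eq_square)
qed

lemma has_lie_deriv_compose:
  assumes "(f has_field_derivative f') (at (F x y))" and "has_lie_deriv P Q F LF x y"
  shows "has_lie_deriv P Q (\<lambda>x y. f (F x y)) (f' * LF) x y"
proof -
  have "(f has_field_derivative f') (at ((\<lambda>t. F (x + t * (- y + P x y)) (y + t * (x + Q x y))) 0))"
    using assms(1) by simp
  from DERIV_chain2[OF this assms(2)[unfolded has_lie_deriv_def]] show ?thesis
    unfolding has_lie_deriv_def by simp
qed

lemma linearizable_of_expansions: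
  assumes r: "0 < r" and X: "dps_expansion r c X" and Y: "dps_expansion r d Y"
    and c: "c 0 0 = 0" "c 1 0 = 1" "c 0 1 = 0"
    and d: "d 0 0 = 0" "d 1 0 = 0" "d 0 1 = 1"
    and LX: "\<And>x y. cmod x < r \<Longrightarrow> cmod y < r \<Longrightarrow> has_lie_deriv P Q X (- Y x y) x y"
    and LY: "\<And>x y. cmod x < r \<Longrightarrow> cmod y < r \<Longrightarrow> has_lie_deriv P Q Y (X x y) x y"
  shows "linearizable P Q"
  unfolding linearizable_def
proof (rule exI[of _ c], rule exI[of _ d], rule exI[of _ r], intro conjI allI impI r c d)
  fix x y :: complex assume xy: "cmod x < r \<and> cmod y < r"
  define S where "S = {t. cmod (x + t * (- y + P x y)) < r \<and> cmod (y + t * (x + Q x y)) < r}"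
  have S: "open S" "0 \<in> S"
    using xy unfolding S_def by (auto intro!: open_Collect_conj open_Collect_less continuous_intros)
  have on_S: "X (x + t * (- y + P x y)) (y + t * (x + Q x y)) = dps c (x + t * (- y + P x y)) (y + t * (x + Q x y))"
      "Y (x + t * (- y + P x y)) (y + t * (x + Q x y)) = dps d (x + t * (- y + P x y)) (y + t * (x + Q x y))"
    if "t \<in> S" for t
    using X Y that by (auto simp: dps_expansion_def S_def)
  have c_xy: "(\<lambda>q. norm (dps_term c x y q)) summable_on UNIV" "dps c x y = X x y"
   and d_xy: "(\<lambda>q. norm (dps_term d x y q)) summable_on UNIV" "dps d x y = Y x y"
    using X Y xy by (auto simp: dps_expansion_def)
  show "(\<lambda>(m, n). c m n * x ^ m * y ^ n) summable_on UNIV" "(\<lambda>(m, n). d m n * x ^ m * y ^ n) summable_on UNIV"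
    using abs_summable_summable[OF c_xy(1)] abs_summable_summable[OF d_xy(1)] by (simp_all add: dps_term_def)
  show "((\<lambda>t. dps c (x + t * (- y + P x y)) (y + t * (x + Q x y))) has_field_derivative - dps d x y) (at 0)"
    using has_field_derivative_transform_within_open[OF LX[unfolded has_lie_deriv_def] S] on_S xy d_xy
    by auto
  show "((\<lambda>t. dps d (x + t * (- y + P x y)) (y + t * (x + Q x y))) has_field_derivative dps c x y) (at 0)"
    using has_field_derivative_transform_within_open[OF LY[unfolded has_lie_deriv_def] S] on_S xy c_xy
    by auto
qed

lemma linearizable_rational:
  assumes r: "0 < r"
    and NX: "dps_expansion r nx NX" "nx 0 0 = 0" "nx 1 0 = 1" "nx 0 1 = 0"
    and NY: "dps_expansion r ny NY" "ny 0 0 = 0" "ny 1 0 = 0" "ny 0 1 = 1"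
    and D: "dps_expansion r d D" "d 0 0 = 1"
    and LNX: "\<And>x y. has_lie_deriv P Q NX (LNX x y) x y"
    and LNY: "\<And>x y. has_lie_deriv P Q NY (LNY x y) x y"
    and LD: "\<And>x y. has_lie_deriv P Q D (LD x y) x y"
    and eqX: "\<And>x y. LNX x y * D x y - NX x y * LD x y = - NY x y * D x y"
    and eqY: "\<And>x y. LNY x y * D x y - NY x y * LD x y = NX x y * D x y"
  shows "linearizable P Q"
proof -
  obtain r' g where r': "0 < r'" "r' \<le> r" and g00: "g 0 0 = 1"
    and G: "dps_expansion r' g (\<lambda>x y. 1 / D x y)"
    and D0: "\<And>x y. cmod x < r' \<Longrightarrow> cmod y < r' \<Longrightarrow> D x y \<noteq> 0"
    using dps_expansion_inverse[OF D r] by blast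
  have X: "dps_expansion r' (dps_mult nx g) (\<lambda>x y. NX x y / D x y)"
    and Y: "dps_expansion r' (dps_mult ny g) (\<lambda>x y. NY x y / D x y)"
    using dps_expansion_mult[OF dps_expansion_mono[OF NX(1) r'(2)] G]
      dps_expansion_mult[OF dps_expansion_mono[OF NY(1) r'(2)] G] by simp_all
  show ?thesis
  proof (rule linearizable_of_expansions[OF r'(1) X Y])
    fix x y assume "cmod x < r'" "cmod y < r'"
    then have "D x y \<noteq> 0" by (rule D0)
    then show "has_lie_deriv P Q (\<lambda>x y. NX x y / D x y) (- (NY x y / D x y)) x y"
      and "has_lie_deriv P Q (\<lambda>x y. NY x y / D x y) (NX x y / D x y) x y"
      using has_lie_deriv_divide[OF LNX LD] has_lie_deriv_divide[OF LNY LD] eqX eqY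
      by (simp_all add: power2_eq_square)
  qed (unfold dps_mult_00 dps_mult_10 dps_mult_01, use NX(2-4) NY(2-4) g00 in simp_all)
qed

lemma linearizable_case2:
  fixes b11 b30 :: complex
  assumes "9 * b30 - b11\<^sup>2 = 0"
  shows "linearizable (\<lambda>x y. 0) (\<lambda>x y. b11 * x * y + b30 * x ^ 3)"
proof -
  define k where "k = - b11 / 3"
  have b11: "b11 = - 3 * k" by (simp add: k_def)
  have b30: "b30 = k\<^sup>2" using assms by (simp add: b11 power_mult_distrib)
  have Q: "(\<lambda>x y. b11 * x * y + b30 * x ^ 3) = (\<lambda>x y. - 3 * k * x * y + k\<^sup>2 * x ^ 3)"
    by (simp add: b11 b30)
  have "linearizable (\<lambda>x y. 0) (\<lambda>x y. - 3 * k * x * y + k\<^sup>2 * x ^ 3)"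
  proof (rule linearizable_rational[where NX="\<lambda>x y. x" and NY="\<lambda>x y. y - k * x\<^sup>2"
        and D="\<lambda>x y. 1 - k * y + k\<^sup>2 * x\<^sup>2" and LNX="\<lambda>x y. - y"
        and LNY="\<lambda>x y. x - k * x * y + k\<^sup>2 * x ^ 3" and LD="\<lambda>x y. - k * x + k\<^sup>2 * x * y - k ^ 3 * x ^ 3"])
    show "dps_expansion 1 (dps_monom 1 0) (\<lambda>x y. x)"
      by (rule dps_expansion_cong[OF dps_expansion_monom]) simp
    show "dps_expansion 1 (\<lambda>m n. dps_monom 0 1 m n + (- k) * dps_monom 2 0 m n) (\<lambda>x y. y - k * x\<^sup>2)"
      by (rule dps_expansion_cong, (rule dps_expansion_intros)+) simp
    show "dps_expansion 1 (\<lambda>m n. dps_monom 0 0 m n + ((- k) * dps_monom 0 1 m n + k\<^sup>2 * dps_monom 2 0 m n))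
        (\<lambda>x y. 1 - k * y + k\<^sup>2 * x\<^sup>2)"
      by (rule dps_expansion_cong, (rule dps_expansion_intros)+) simp
  qed (auto simp: has_lie_deriv_def dps_monom_def intro!: derivative_eq_intros,
       (simp add: algebra_simps power2_eq_square power3_eq_cube)+)
  then show ?thesis by (simp only: Q)
qed

lemma linearizable_case3:
  fixes a03 b02 :: complex
  assumes "9 * a03 + 4 * b02\<^sup>2 = 0"
  shows "linearizable (\<lambda>x y. a03 * y ^ 3) (\<lambda>x y. b02 * y\<^sup>2)"
proof -
  have a03: "a03 = - 4 / 9 * b02\<^sup>2"
    using assms by algebra
  show ?thesis
  proof (rule linearizable_rational[where NX="\<lambda>x y. x + b02 / 3 * y\<^sup>2" and NY="\<lambda>x y. y"
        and D="\<lambda>x y. 1 - 2 * b02 / 3 * x - 2 * b02\<^sup>2 / 9 * y\<^sup>2"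
        and LNX="\<lambda>x y. (- y + a03 * y ^ 3) + 2 * b02 / 3 * y * (x + b02 * y\<^sup>2)"
        and LNY="\<lambda>x y. x + b02 * y\<^sup>2"
        and LD="\<lambda>x y. - 2 * b02 / 3 * (- y + a03 * y ^ 3) - 4 * b02\<^sup>2 / 9 * y * (x + b02 * y\<^sup>2)"])
    show "dps_expansion 1 (\<lambda>m n. dps_monom 1 0 m n + b02 / 3 * dps_monom 0 2 m n) (\<lambda>x y. x + b02 / 3 * y\<^sup>2)"
      by (rule dps_expansion_cong, (rule dps_expansion_intros)+) simp
    show "dps_expansion 1 (dps_monom 0 1) (\<lambda>x y. y)"
      by (rule dps_expansion_cong[OF dps_expansion_monom]) simp
    show "dps_expansion 1 (\<lambda>m n. dps_monom 0 0 m n + ((- 2 * b02 / 3) * dps_monom 1 0 m n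
        + (- 2 * b02\<^sup>2 / 9) * dps_monom 0 2 m n)) (\<lambda>x y. 1 - 2 * b02 / 3 * x - 2 * b02\<^sup>2 / 9 * y\<^sup>2)"
      by (rule dps_expansion_cong, (rule dps_expansion_intros)+) (simp add: algebra_simps)
  qed (auto simp: has_lie_deriv_def dps_monom_def a03 intro!: derivative_eq_intros,
       (simp add: field_simps power2_eq_square power3_eq_cube)+)
qed

lemma linearizable_case4:
  fixes a02 b20 b11 b02 :: complex
  assumes "2 * b02 + 5 * b20 = 0" and "10 * a02 - 3 * b11 = 0" and rel: "4 * b11\<^sup>2 + 25 * b20\<^sup>2 = 0"
  shows "linearizable (\<lambda>x y. a02 * y\<^sup>2) (\<lambda>x y. b20 * x\<^sup>2 + b11 * x * y + b02 * y\<^sup>2)"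
proof -
  have b02: "b02 = - 5 / 2 * b20" and a02: "a02 = 3 / 10 * b11"
    using assms(1,2) by algebra+
  define u v where "u x y = - y + a02 * y\<^sup>2" and "v x y = x + (b20 * x\<^sup>2 + b11 * x * y + b02 * y\<^sup>2)"
    for x y :: complex
  define NX where "NX x y = x + 2 / 3 * b20 * x\<^sup>2 + 4 / 15 * b11 * x * y - 1 / 6 * b20 * y\<^sup>2" for x y :: complex
  define NY where "NY x y = y + 2 / 15 * b11 * x\<^sup>2 - 1 / 3 * b20 * x * y - 1 / 30 * b11 * y\<^sup>2" for x y :: complex
  define L where "L x y = 1 + b20 * x + b11 / 5 * y" for x y :: complex
  define l where "l m n = dps_monom 0 0 m n + (b20 * dps_monom 1 0 m n + b11 / 5 * dps_monom 0 1 m n)" for m n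
  have l: "dps_expansion 1 l L"
    unfolding l_def L_def by (rule dps_expansion_cong, (rule dps_expansion_intros)+) simp
  show ?thesis
  proof (rule linearizable_rational[where NX=NX and NY=NY and D="\<lambda>x y. (L x y)\<^sup>2"
        and LNX="\<lambda>x y. u x y * (1 + 4 / 3 * b20 * x + 4 / 15 * b11 * y) + v x y * (4 / 15 * b11 * x - 1 / 3 * b20 * y)"
        and LNY="\<lambda>x y. u x y * (4 / 15 * b11 * x - 1 / 3 * b20 * y) + v x y * (1 - 1 / 3 * b20 * x - 1 / 15 * b11 * y)"
        and LD="\<lambda>x y. 2 * L x y * (b20 * u x y + b11 / 5 * v x y)"])
    show "dps_expansion 1 (\<lambda>m n. dps_monom 1 0 m n + (2 / 3 * b20 * dps_monom 2 0 m n
        + (4 / 15 * b11 * dps_monom 1 1 m n + (- 1 / 6 * b20) * dps_monom 0 2 m n))) NX"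
      unfolding NX_def by (rule dps_expansion_cong, (rule dps_expansion_intros)+) (simp add: algebra_simps)
    show "dps_expansion 1 (\<lambda>m n. dps_monom 0 1 m n + (2 / 15 * b11 * dps_monom 2 0 m n
        + ((- 1 / 3 * b20) * dps_monom 1 1 m n + (- 1 / 30 * b11) * dps_monom 0 2 m n))) NY"
      unfolding NY_def by (rule dps_expansion_cong, (rule dps_expansion_intros)+) (simp add: algebra_simps)
    show "dps_expansion 1 (dps_mult l l) (\<lambda>x y. (L x y)\<^sup>2)"
      by (rule dps_expansion_cong[OF dps_expansion_mult[OF l l]]) (simp add: power2_eq_square)
    show "dps_mult l l 0 0 = 1"
      by (simp add: dps_mult_00 l_def dps_monom_def)
    fix x y :: complex
    \<comment> \<open>Both identities hold modulo \<open>4 * b11\<^sup>2 + 25 * b20\<^sup>2\<close>; \<open>q1\<close> and \<open>q2\<close> are the cofactors.\<close>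
    define q1 where "q1 = 1 / 250 * y ^ 4 * b11 - 1 / 75 * x\<^sup>2 * y\<^sup>2 * b11 + 1 / 50 * y ^ 3
      + 1 / 30 * x * y ^ 3 * b20 - 1 / 25 * x\<^sup>2 * y - 1 / 75 * x ^ 3 * y * b20"
    define q2 where "q2 = 1 / 250 * x * y ^ 3 * b11 - 1 / 75 * x ^ 3 * y * b11 - 11 / 150 * x * y\<^sup>2
      + 1 / 30 * x\<^sup>2 * y\<^sup>2 * b20 - 1 / 75 * x ^ 3 - 1 / 75 * x ^ 4 * b20"
    have "(u x y * (1 + 4 / 3 * b20 * x + 4 / 15 * b11 * y) + v x y * (4 / 15 * b11 * x - 1 / 3 * b20 * y))
        * (L x y)\<^sup>2 - NX x y * (2 * L x y * (b20 * u x y + b11 / 5 * v x y)) + NY x y * (L x y)\<^sup>2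
      = (4 * b11\<^sup>2 + 25 * b20\<^sup>2) * (q1 * L x y)"
      unfolding u_def v_def NX_def NY_def L_def q1_def a02 b02 by (simp add: field_simps eval_nat_numeral)
    then show "(u x y * (1 + 4 / 3 * b20 * x + 4 / 15 * b11 * y) + v x y * (4 / 15 * b11 * x - 1 / 3 * b20 * y))
        * (L x y)\<^sup>2 - NX x y * (2 * L x y * (b20 * u x y + b11 / 5 * v x y)) = - NY x y * (L x y)\<^sup>2"
      using rel by (simp add: eq_neg_iff_add_eq_0)
    have "(u x y * (4 / 15 * b11 * x - 1 / 3 * b20 * y) + v x y * (1 - 1 / 3 * b20 * x - 1 / 15 * b11 * y))
        * (L x y)\<^sup>2 - NY x y * (2 * L x y * (b20 * u x y + b11 / 5 * v x y)) - NX x y * (L x y)\<^sup>2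
      = (4 * b11\<^sup>2 + 25 * b20\<^sup>2) * (q2 * L x y)"
      unfolding u_def v_def NX_def NY_def L_def q2_def a02 b02 by (simp add: field_simps eval_nat_numeral)
    then show "(u x y * (4 / 15 * b11 * x - 1 / 3 * b20 * y) + v x y * (1 - 1 / 3 * b20 * x - 1 / 15 * b11 * y))
        * (L x y)\<^sup>2 - NY x y * (2 * L x y * (b20 * u x y + b11 / 5 * v x y)) = NX x y * (L x y)\<^sup>2"
      using rel by simp
  qed (auto simp: has_lie_deriv_def dps_monom_def NX_def NY_def L_def u_def v_def intro!: derivative_eq_intros,
       (simp add: field_simps power2_eq_square)+)
qed

section \<open>The isotropic quadratic case\<close>

text \<open>\<open>psi b\<close> solves \<open>u (1 + b u) \<psi>' + \<psi> = b u\<^sup>2\<close> (\<open>psi_ode\<close>): comparing coefficients gives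
  \<open>(k + 1) a\<^sub>k + b (k - 1) a\<^sub>k\<^sub>-\<^sub>1 = b [k = 2]\<close>, solved by the closed form below.\<close>
definition psi_coeff :: "complex \<Rightarrow> nat \<Rightarrow> complex" where
  "psi_coeff b k = (if 2 \<le> k then 2 * (- 1) ^ k * b ^ (k - 1) / (of_nat k * of_nat (k + 1)) else 0)"

definition psi :: "complex \<Rightarrow> complex \<Rightarrow> complex" where
  "psi b u = (\<Sum>k. psi_coeff b k * u ^ k)"

definition psi_radius :: "complex \<Rightarrow> real" where
  "psi_radius b = 1 / (2 * (norm b + 1))"

lemma psi_radius_pos: "0 < psi_radius b"
  unfolding psi_radius_def by (simp add: add_nonneg_pos)

lemma norm_psi_coeff_le: "norm (psi_coeff b k) \<le> (norm b + 1) ^ k"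
proof (cases "2 \<le> k")
  case True
  have "(2::real) * 1 \<le> real k * real (k + 1)"
    using True by (intro mult_mono) auto
  then have "2 * norm b ^ (k - 1) \<le> real k * real (k + 1) * norm b ^ (k - 1)"
    by (intro mult_right_mono) auto
  then have "norm (psi_coeff b k) \<le> norm b ^ (k - 1)"
    using True by (simp add: psi_coeff_def norm_mult norm_divide norm_power field_simps
        del: of_nat_add of_nat_Suc)
  also have "\<dots> \<le> (norm b + 1) ^ (k - 1)" by (intro power_mono) auto
  also have "\<dots> \<le> (norm b + 1) ^ k" by (intro power_increasing) auto
  finally show ?thesis .
qed (simp add: psi_coeff_def)

lemma psi_coeff_summable: "summable (\<lambda>k. norm (psi_coeff b k) * psi_radius b ^ k)"
proof (rule summable_comparison_test'[OF summable_geometric[of "1 / 2 :: real"]])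
  fix k :: nat
  have "norm (psi_coeff b k) * psi_radius b ^ k \<le> ((norm b + 1) * psi_radius b) ^ k"
    unfolding power_mult_distrib using psi_radius_pos[of b]
    by (intro mult_right_mono norm_psi_coeff_le) auto
  also have "(norm b + 1) * psi_radius b = 1 / 2"
    unfolding psi_radius_def by (simp add: field_simps) (smt (verit) norm_ge_zero)
  finally show "norm (norm (psi_coeff b k) * psi_radius b ^ k) \<le> (1 / 2) ^ k"
    using psi_radius_pos[of b] by simp
qed simp

lemma psi_summable:
  assumes "norm u < psi_radius b"
  shows "summable (\<lambda>k. psi_coeff b k * u ^ k)"
proof (rule summable_norm_cancel, rule summable_comparison_test'[OF psi_coeff_summable])
  fix k
  show "norm (norm (psi_coeff b k * u ^ k)) \<le> norm (psi_coeff b k) * psi_radius b ^ k"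
    using assms by (simp add: norm_mult norm_power mult_left_mono power_mono)
qed

lemma psi_has_field_derivative:
  "norm u < psi_radius b \<Longrightarrow> (psi b has_field_derivative (\<Sum>k. diffs (psi_coeff b) k * u ^ k)) (at u)"
  unfolding psi_def[abs_def] by (rule termdiffs_strong'[where K="psi_radius b"]) (auto intro: psi_summable)

lemma psi_coeff_recurrence:
  "of_nat (k + 1) * psi_coeff b k + (if 1 \<le> k then b * of_nat (k - 1) * psi_coeff b (k - 1) else 0)
     = (if k = 2 then b else 0)"
proof (cases "k \<le> 2")
  case True
  then consider "k = 0" | "k = 1" | "k = 2" by linarith
  then show ?thesis by cases (simp_all add: psi_coeff_def)
next
  case False
  define n where "n = k - 1"
  have kn: "k = Suc n" "2 \<le> n" using False by (simp_all add: n_def)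
  then have nz: "(of_nat k :: complex) \<noteq> 0" "(of_nat (Suc k) :: complex) \<noteq> 0" "(of_nat n :: complex) \<noteq> 0"
    by (simp_all only: of_nat_eq_0_iff)
  have "b * b ^ (n - 1) = b ^ n" using kn by (simp add: power_eq_if)
  then show ?thesis
    using kn nz by (simp add: psi_coeff_def field_simps del: of_nat_Suc)
qed

lemma psi_ode:
  assumes u: "norm u < psi_radius b"
  shows "u * (1 + b * u) * (\<Sum>k. diffs (psi_coeff b) k * u ^ k) + psi b u = b * u\<^sup>2"
proof -
  define a where "a = psi_coeff b"
  define D where "D = (\<Sum>k. diffs a k * u ^ k)"
  have D: "(\<lambda>k. diffs a k * u ^ k) sums D"
    unfolding D_def a_def by (intro summable_sums termdiff_converges[OF u] psi_summable)
  have psi: "(\<lambda>k. a k * u ^ k) sums psi b u"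
    unfolding a_def psi_def using psi_summable[OF u] by (simp add: summable_sums)
  have "(\<lambda>k. of_nat (Suc k) * a (Suc k) * u ^ Suc k) sums (u * D)"
    using sums_mult[OF D, of u] by (simp add: diffs_def algebra_simps)
  then have uD: "(\<lambda>k. of_nat k * a k * u ^ k) sums (u * D)"
    by (subst (asm) sums_Suc_iff) simp
  define g where "g k = (if 1 \<le> k then b * of_nat (k - 1) * a (k - 1) else 0) * u ^ k" for k
  have "(\<lambda>k. g (Suc (Suc k))) sums (b * u\<^sup>2 * D)"
    using sums_mult[OF D, of "b * u\<^sup>2"] by (simp add: g_def diffs_def algebra_simps power2_eq_square)
  then have "(\<lambda>k. g (Suc k)) sums (b * u\<^sup>2 * D + g (Suc 0))"
    by (subst (asm) sums_Suc_iff) simp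
  then have "g sums (b * u\<^sup>2 * D + g (Suc 0) + g 0)"
    by (subst (asm) sums_Suc_iff) simp
  then have bu2D: "g sums (b * u\<^sup>2 * D)"
    by (simp add: g_def a_def psi_coeff_def)
  have "(\<lambda>k. a k * u ^ k + of_nat k * a k * u ^ k + g k) sums (psi b u + u * D + b * u\<^sup>2 * D)"
    by (intro sums_add psi uD bu2D)
  also have "(\<lambda>k. a k * u ^ k + of_nat k * a k * u ^ k + g k) = (\<lambda>k. if k = 2 then b * u\<^sup>2 else 0)"
  proof
    fix k
    have "a k * u ^ k + of_nat k * a k * u ^ k + g k
        = (of_nat (k + 1) * a k + (if 1 \<le> k then b * of_nat (k - 1) * a (k - 1) else 0)) * u ^ k"
      by (simp add: g_def algebra_simps)
    then show "a k * u ^ k + of_nat k * a k * u ^ k + g k = (if k = 2 then b * u\<^sup>2 else 0)"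
      unfolding a_def psi_coeff_recurrence by simp
  qed
  finally have "psi b u + u * D + b * u\<^sup>2 * D = b * u\<^sup>2"
    using sums_single[of 2 "\<lambda>_. b * u\<^sup>2"] sums_unique2 by blast
  then show ?thesis
    by (simp add: D_def a_def algebra_simps power2_eq_square)
qed

lemma has_lie_deriv_isotropic_linear:
  assumes j: "j\<^sup>2 = - 1"
  shows "has_lie_deriv (\<lambda>x y. 0) (\<lambda>x y. b * (x + j * y)\<^sup>2) (\<lambda>x y. x + j * y)
    (j * (x + j * y) * (1 + b * (x + j * y))) x y"
  unfolding has_lie_deriv_def by (auto intro!: derivative_eq_intros) (use j in algebra)

lemma has_lie_deriv_isotropic_Z:
  assumes j: "j\<^sup>2 = - 1" and D: "1 + b * (x + j * y) \<noteq> 0"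
  shows "has_lie_deriv (\<lambda>x y. 0) (\<lambda>x y. b * (x + j * y)\<^sup>2) (\<lambda>x y. (x + j * y) / (1 + b * (x + j * y)))
    (j * ((x + j * y) / (1 + b * (x + j * y)))) x y"
proof -
  define z w where "z = x + j * y" and "w = 1 + b * (x + j * y)"
  note Lz = has_lie_deriv_isotropic_linear[OF j, of b x y]
  have "((\<lambda>u. 1 + b * u) has_field_derivative b) (at (x + j * y))"
    by (auto intro!: derivative_eq_intros)
  from has_lie_deriv_compose[OF this Lz]
  have Lw: "has_lie_deriv (\<lambda>x y. 0) (\<lambda>x y. b * (x + j * y)\<^sup>2) (\<lambda>x y. 1 + b * (x + j * y))
      (b * (j * z * w)) x y"
    by (simp add: z_def w_def)
  have "j * z * w * w - z * (b * (j * z * w)) = j * z * w * (w - b * z)"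
    by (simp add: algebra_simps)
  also have "w - b * z = 1"
    by (simp add: w_def z_def)
  finally have "(j * z * w * w - z * (b * (j * z * w))) / w\<^sup>2 = j * (z / w)"
    using D[folded w_def] by (simp add: power2_eq_square)
  with has_lie_deriv_divide[OF Lz[folded z_def w_def] Lw D] show ?thesis
    unfolding z_def w_def by simp
qed

lemma has_lie_deriv_isotropic_W:
  assumes j: "j\<^sup>2 = - 1" and z: "cmod (x + j * y) < psi_radius b"
  shows "has_lie_deriv (\<lambda>x y. 0) (\<lambda>x y. b * (x + j * y)\<^sup>2) (\<lambda>x y. x - j * y + psi b (x + j * y))
    (- j * (x - j * y + psi b (x + j * y))) x y"
proof -
  define z psi' where "z = x + j * y" and "psi' = (\<Sum>k. diffs (psi_coeff b) k * z ^ k)"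
  have "has_lie_deriv (\<lambda>x y. 0) (\<lambda>x y. b * (x + j * y)\<^sup>2) (\<lambda>x y. psi b (x + j * y))
      (psi' * (j * z * (1 + b * z))) x y"
    using has_lie_deriv_compose[OF psi_has_field_derivative[OF z] has_lie_deriv_isotropic_linear[OF j]]
    by (simp add: psi'_def z_def)
  then have "has_lie_deriv (\<lambda>x y. 0) (\<lambda>x y. b * (x + j * y)\<^sup>2) (\<lambda>x y. x - j * y + psi b (x + j * y))
      (- y - j * (x + b * z\<^sup>2) + psi' * (j * z * (1 + b * z))) x y"
    unfolding has_lie_deriv_def z_def by (auto intro!: derivative_eq_intros)
  moreover have "- y - j * (x + b * z\<^sup>2) + psi' * (j * z * (1 + b * z))
      = - y - j * x - j * (b * z\<^sup>2 - z * (1 + b * z) * psi')"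
    by (simp add: algebra_simps)
  also have "\<dots> = - j * (x - j * y + psi b z)"
    using psi_ode[OF z[folded z_def]] j unfolding psi'_def by (simp add: algebra_simps) algebra
  ultimately show ?thesis by (simp add: z_def)
qed

lemma isotropic_coordinates_expansion:
  assumes j: "j\<^sup>2 = - 1"
  obtains r Zc Wc where "0 < r"
    and "dps_expansion r Zc (\<lambda>x y. (x + j * y) / (1 + b * (x + j * y)))" "Zc 0 0 = 0" "Zc 1 0 = 1" "Zc 0 1 = j"
    and "dps_expansion r Wc (\<lambda>x y. x - j * y + psi b (x + j * y))" "Wc 0 0 = 0" "Wc 1 0 = 1" "Wc 0 1 = - j"
    and "\<And>x y. cmod x < r \<Longrightarrow> cmod y < r \<Longrightarrow> 1 + b * (x + j * y) \<noteq> 0 \<and> cmod (x + j * y) < psi_radius b"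
proof -
  define zc where "zc m n = dps_monom 1 0 m n + j * dps_monom 0 1 m n" for m n
  have Ez: "dps_expansion 1 zc (\<lambda>x y. x + j * y)"
    unfolding zc_def by (rule dps_expansion_cong, (rule dps_expansion_intros)+) simp
  have zc: "zc 0 0 = 0" "zc 1 0 = 1" "zc 0 1 = j"
    by (simp_all add: zc_def dps_monom_def)
  have "dps_expansion 1 (\<lambda>m n. dps_monom 0 0 m n + b * zc m n) (\<lambda>x y. 1 + b * (x + j * y))"
    by (rule dps_expansion_cong[OF dps_expansion_add[OF dps_expansion_monom dps_expansion_scale[OF Ez]]]) simp
  then obtain r1 g where r1: "0 < r1" "r1 \<le> 1" and g00: "g 0 0 = 1"
    and Einv: "dps_expansion r1 g (\<lambda>x y. 1 / (1 + b * (x + j * y)))"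
    and nonzero: "\<And>x y. cmod x < r1 \<Longrightarrow> cmod y < r1 \<Longrightarrow> 1 + b * (x + j * y) \<noteq> 0"
    by (rule dps_expansion_inverse) (simp_all add: zc dps_monom_def)
  obtain r2 where r2: "0 < r2" "r2 \<le> 1"
    and Epsi: "dps_expansion r2 (dps_compose (psi_coeff b) zc) (\<lambda>x y. psi b (x + j * y))"
    and small: "\<And>x y. cmod x < r2 \<Longrightarrow> cmod y < r2 \<Longrightarrow> cmod (x + j * y) < psi_radius b"
    by (rule dps_expansion_compose[OF Ez zc(1) _ psi_radius_pos[of b] psi_coeff_summable[of b]])
       (simp_all add: psi_def)
  define r where "r = min r1 r2"
  have r: "0 < r" "r \<le> r1" "r \<le> r2" "r \<le> 1" using r1 r2 by (auto simp: r_def)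
  show ?thesis
  proof (rule that[OF r(1)])
    show "dps_expansion r (dps_mult zc g) (\<lambda>x y. (x + j * y) / (1 + b * (x + j * y)))"
      by (rule dps_expansion_cong[OF dps_expansion_mult[OF dps_expansion_mono[OF Ez r(4)]
            dps_expansion_mono[OF Einv r(2)]]]) simp
    show "dps_mult zc g 0 0 = 0" "dps_mult zc g 1 0 = 1" "dps_mult zc g 0 1 = j"
      unfolding dps_mult_00 dps_mult_10 dps_mult_01 using zc g00 by simp_all
    show "dps_expansion r (\<lambda>m n. (dps_monom 1 0 m n + (- j) * dps_monom 0 1 m n) + dps_compose (psi_coeff b) zc m n)
        (\<lambda>x y. x - j * y + psi b (x + j * y))"
      by (rule dps_expansion_cong[OF dps_expansion_add[OF dps_expansion_add[OF dps_expansion_monom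
            dps_expansion_scale[OF dps_expansion_monom]] dps_expansion_mono[OF Epsi r(3)]]]) simp
    show "dps_monom 1 0 0 0 + - j * dps_monom 0 1 0 0 + dps_compose (psi_coeff b) zc 0 0 = 0"
      "dps_monom 1 0 1 0 + - j * dps_monom 0 1 1 0 + dps_compose (psi_coeff b) zc 1 0 = 1"
      "dps_monom 1 0 0 1 + - j * dps_monom 0 1 0 1 + dps_compose (psi_coeff b) zc 0 1 = - j"
      unfolding dps_compose_00 dps_compose_10 dps_compose_01 by (simp_all add: dps_monom_def psi_coeff_def)
    show "1 + b * (x + j * y) \<noteq> 0 \<and> cmod (x + j * y) < psi_radius b" if "cmod x < r" "cmod y < r" for x y
      using nonzero small that r by auto
  qed
qed

lemma linearizable_isotropic_square:
  assumes j: "j\<^sup>2 = - 1"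
  shows "linearizable (\<lambda>x y. 0) (\<lambda>x y. b * (x + j * y)\<^sup>2)"
proof -
  define Z W where "Z x y = (x + j * y) / (1 + b * (x + j * y))"
    and "W x y = x - j * y + psi b (x + j * y)" for x y
  obtain r Zc Wc where r: "0 < r" and EZ: "dps_expansion r Zc Z" "Zc 0 0 = 0" "Zc 1 0 = 1" "Zc 0 1 = j"
    and EW: "dps_expansion r Wc W" "Wc 0 0 = 0" "Wc 1 0 = 1" "Wc 0 1 = - j"
    and near0: "\<And>x y. cmod x < r \<Longrightarrow> cmod y < r \<Longrightarrow> 1 + b * (x + j * y) \<noteq> 0 \<and> cmod (x + j * y) < psi_radius b"
    using isotropic_coordinates_expansion[OF j, of b] unfolding Z_def[abs_def] W_def[abs_def] by blast
  show ?thesis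
  proof (rule linearizable_of_expansions[where X="\<lambda>x y. (Z x y + W x y) / 2" and Y="\<lambda>x y. j * (W x y - Z x y) / 2"])
    show "dps_expansion r (\<lambda>m n. 1 / 2 * Zc m n + 1 / 2 * Wc m n) (\<lambda>x y. (Z x y + W x y) / 2)"
      by (rule dps_expansion_cong[OF dps_expansion_add[OF dps_expansion_scale[OF EZ(1)] dps_expansion_scale[OF EW(1)]]])
         simp
    show "dps_expansion r (\<lambda>m n. - j / 2 * Zc m n + j / 2 * Wc m n) (\<lambda>x y. j * (W x y - Z x y) / 2)"
      by (rule dps_expansion_cong[OF dps_expansion_add[OF dps_expansion_scale[OF EZ(1)] dps_expansion_scale[OF EW(1)]]])
         (simp add: algebra_simps)
    fix x y assume "cmod x < r" "cmod y < r"
    then have LZ: "has_lie_deriv (\<lambda>x y. 0) (\<lambda>x y. b * (x + j * y)\<^sup>2) Z (j * Z x y) x y"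
      and LW: "has_lie_deriv (\<lambda>x y. 0) (\<lambda>x y. b * (x + j * y)\<^sup>2) W (- j * W x y) x y"
      using near0 has_lie_deriv_isotropic_Z[OF j] has_lie_deriv_isotropic_W[OF j]
      unfolding Z_def[abs_def] W_def[abs_def] by blast+
    show "has_lie_deriv (\<lambda>x y. 0) (\<lambda>x y. b * (x + j * y)\<^sup>2) (\<lambda>x y. (Z x y + W x y) / 2)
        (- (j * (W x y - Z x y) / 2)) x y"
      using LZ LW unfolding has_lie_deriv_def by (auto intro!: derivative_eq_intros simp: field_simps)
    show "has_lie_deriv (\<lambda>x y. 0) (\<lambda>x y. b * (x + j * y)\<^sup>2) (\<lambda>x y. j * (W x y - Z x y) / 2)
        ((Z x y + W x y) / 2) x y"
      using LZ LW unfolding has_lie_deriv_def by (auto intro!: derivative_eq_intros) (use j in algebra)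
  qed (use r EZ(2-4) EW(2-4) j in \<open>simp_all add: power2_eq_square\<close>)
qed

lemma linearizable_case1:
  fixes b20 b11 b02 :: complex
  assumes b02: "b02 + b20 = 0" and b11: "b11\<^sup>2 + 4 * b20\<^sup>2 = 0"
  shows "linearizable (\<lambda>x y. 0) (\<lambda>x y. b20 * x\<^sup>2 + b11 * x * y + b02 * y\<^sup>2)"
proof -
  obtain j where j: "j\<^sup>2 = - 1" "b11 = 2 * j * b20"
  proof (cases "b20 = 0")
    case True
    then show ?thesis using b11 that[of \<i>] by simp
  next
    case False
    have "(b11 / (2 * b20))\<^sup>2 = - 1"
      using b11 False by (simp add: power_divide field_simps eq_neg_iff_add_eq_0)
    then show ?thesis using that False by simp
  qed
  have "b20 * x\<^sup>2 + b11 * x * y + b02 * y\<^sup>2 = b20 * (x + j * y)\<^sup>2" for x y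
    using b02 j by (simp add: power2_eq_square algebra_simps) algebra
  then show ?thesis
    using linearizable_isotropic_square[OF j(1), of b20] by simp
qed

theorem theorem1:
  fixes a02 a03 b20 b11 b02 b30 b21 b12 :: complex
  assumes "(b12 = 0 \<and> a02 = 0 \<and> b30 = 0 \<and> b21 = 0 \<and> a03 = 0 \<and> b02 + b20 = 0
              \<and> b11^2 + 4 * b20^2 = 0)
         \<or> (b12 = 0 \<and> a02 = 0 \<and> b20 = 0 \<and> b02 = 0 \<and> b21 = 0 \<and> a03 = 0
              \<and> 9 * b30 - b11^2 = 0)
         \<or> (b12 = 0 \<and> a02 = 0 \<and> b11 = 0 \<and> b20 = 0 \<and> b30 = 0 \<and> b21 = 0
              \<and> 9 * a03 + 4 * b02^2 = 0)
         \<or> (b12 = 0 \<and> b30 = 0 \<and> b21 = 0 \<and> a03 = 0 \<and> 2 * b02 + 5 * b20 = 0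
              \<and> 10 * a02 - 3 * b11 = 0 \<and> 4 * b11^2 + 25 * b20^2 = 0)"
  shows "linearizable
           (\<lambda>x y. a02 * y^2 + a03 * y^3)
           (\<lambda>x y. b20 * x^2 + b11 * x * y + b02 * y^2 + b30 * x^3 + b21 * x^2 * y + b12 * x * y^2)"
  using assms
proof (elim disjE conjE)
  assume "b12 = 0" "a02 = 0" "b30 = 0" "b21 = 0" "a03 = 0" "b02 + b20 = 0" "b11^2 + 4 * b20^2 = 0"
  then show ?thesis using linearizable_case1[of b02 b20 b11] by simp
next
  assume "b12 = 0" "a02 = 0" "b20 = 0" "b02 = 0" "b21 = 0" "a03 = 0" "9 * b30 - b11^2 = 0"
  then show ?thesis using linearizable_case2[of b30 b11] by simp
next
  assume "b12 = 0" "a02 = 0" "b11 = 0" "b20 = 0" "b30 = 0" "b21 = 0" "9 * a03 + 4 * b02^2 = 0"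
  then show ?thesis using linearizable_case3[of a03 b02] by simp
next
  assume "b12 = 0" "b30 = 0" "b21 = 0" "a03 = 0" "2 * b02 + 5 * b20 = 0" "10 * a02 - 3 * b11 = 0"
    "4 * b11^2 + 25 * b20^2 = 0"
  then show ?thesis using linearizable_case4[of b02 b20 a02 b11] by simp
qed

end
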